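(* Consider a cake-division instance $\langle [n],\{v_a\}_{a\in[n]}\rangle$, let $\alpha\ge1$, let $\widetilde{\mathcal{I}}$ be an $\alpha$-approximately envy-free allocation and let $\mathcal{I}^*$ be a Nash optimal allocation. Then (i) $\mathrm{NSW}(\widetilde{\mathcal{I}})\ge\frac{1}{2\alpha}\mathrm{NSW}(\mathcal{I}^* )$; and (ii) $\mathcal{I}^*$ is $4$-approximately envy-free.
   Context: The cake is $[0,1]$. Each agent's valuation $v_a$ assigns a value $v_a(I)\ge0$ to every interval $I\subseteq[0,1]$ and is normalized ($v_a([0,1])=1$), divisible (for every interval $[x,y]$ and $\lambda\in[0,1]$ there is $z\in[x,y]$ with $v_a([x,z])=\lambda v_a([x,y])$; in particular single points have value $0$), and sigma additive ($v_a(I\cup J)=v_a(I)+v_a(J)$ for disjoint intervals). Intervals meeting only at an endpoint are regarded as disjoint. An allocation is a tuple $\mathcal{I}=\{I_1,\dots,I_n\}$ of pairwise-disjoint (possibly empty) intervals with $\bigcup_aI_a=[0,1]$, $I_a$ going to agent $a$. For $\alpha\ge1$, $\mathcal{I}$ is $\alpha$-approximately envy-free if $v_a(I_a)\ge\frac1\alpha v_a(I_b)$ for all $a,b$. $\mathrm{NSW}(\mathcal{I})=\left(\prod_a v_a(I_a)\right)^{1/n}$, and a Nash optimal allocation is one maximizing $\mathrm{NSW}$ over all allocations. *)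

theory Defs
  imports "HOL-Analysis.Analysis"
begin

definition cake_interval :: "real set \<Rightarrow> bool" where
  "cake_interval I \<longleftrightarrow> is_interval I \<and> I \<subseteq> {0..1}"

text \<open>Intervals meeting only at an endpoint are regarded as disjoint.\<close>
definition int_disjoint :: "real set \<Rightarrow> real set \<Rightarrow> bool" where
  "int_disjoint I J \<longleftrightarrow> (\<exists>x. I \<inter> J \<subseteq> {x})"

definition valuation :: "(real set \<Rightarrow> real) \<Rightarrow> bool" where
  "valuation v \<longleftrightarrow>
     (\<forall>I. cake_interval I \<longrightarrow> v I \<ge> 0) \<and>
     v {0..1} = 1 \<and>
     (\<forall>x y l. 0 \<le> x \<and> x \<le> y \<and> y \<le> 1 \<and> 0 \<le> l \<and> l \<le> 1 \<longrightarrow>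
        (\<exists>z\<in>{x..y}. v {x..z} = l * v {x..y})) \<and>
     (\<forall>I J. cake_interval I \<and> cake_interval J \<and> cake_interval (I \<union> J) \<and> int_disjoint I J
        \<longrightarrow> v (I \<union> J) = v I + v J)"

definition allocation :: "nat \<Rightarrow> (nat \<Rightarrow> real set) \<Rightarrow> bool" where
  "allocation n A \<longleftrightarrow>
     (\<forall>a<n. cake_interval (A a)) \<and>
     (\<forall>a<n. \<forall>b<n. a \<noteq> b \<longrightarrow> int_disjoint (A a) (A b)) \<and>
     (\<Union>a<n. A a) = {0..1}"

definition approx_EF :: "nat \<Rightarrow> (nat \<Rightarrow> real set \<Rightarrow> real) \<Rightarrow> real \<Rightarrow> (nat \<Rightarrow> real set) \<Rightarrow> bool" where
  "approx_EF n v \<alpha> A \<longleftrightarrow> (\<forall>a<n. \<forall>b<n. v a (A a) \<ge> (1 / \<alpha>) * v a (A b))"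

definition NSW :: "nat \<Rightarrow> (nat \<Rightarrow> real set \<Rightarrow> real) \<Rightarrow> (nat \<Rightarrow> real set) \<Rightarrow> real" where
  "NSW n v A = root n (\<Prod>a<n. v a (A a))"

definition nash_optimal :: "nat \<Rightarrow> (nat \<Rightarrow> real set \<Rightarrow> real) \<Rightarrow> (nat \<Rightarrow> real set) \<Rightarrow> bool" where
  "nash_optimal n v A \<longleftrightarrow> allocation n A \<and> (\<forall>B. allocation n B \<longrightarrow> NSW n v B \<le> NSW n v A)"

end

theory Submission
  imports Defs
begin

text \<open>
  (i) Every piece of a Nash optimal allocation \<open>O\<close> is covered by the pieces of the
  \<open>\<alpha>\<close>-envy-free allocation \<open>E\<close> it meets nondegenerately, so \<open>v\<^sub>a(O\<^sub>a) \<le> k\<^sub>a \<alpha> v\<^sub>a(E\<^sub>a)\<close> where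
  \<open>k\<^sub>a\<close> counts these pieces. Such an intersection starts where \<open>O\<^sub>a\<close> or \<open>E\<^sub>b\<close> starts and
  is determined by its left endpoint, so \<open>\<Sum>k\<^sub>a \<le> 2n\<close>, and by AM-GM \<open>\<Prod>k\<^sub>a \<le> 2\<^sup>n\<close>.

  (ii) If agent \<open>a\<close> valued \<open>b\<close>'s Nash optimal piece more than four times her own, replacing
  pieces by their closed hulls (which changes no value) lets \<open>a\<close> and \<open>b\<close> split \<open>b\<close>'s
  piece -- after \<open>a\<close> gives her own piece to a touching neighbour, unless it already touches
  \<open>b\<close>'s -- so that \<open>a\<close> gains a factor above 2 and \<open>b\<close> loses at most a factor 2, and
  the Nash welfare strictly increases.
\<close>

section \<open>Pieces and their values\<close>

definition nondegenerate :: "real set \<Rightarrow> bool" where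
  "nondegenerate I \<longleftrightarrow> (\<exists>x y. x \<in> I \<and> y \<in> I \<and> x < y)"

lemma int_disjoint_iff_not_nondegenerate: "int_disjoint I J \<longleftrightarrow> \<not> nondegenerate (I \<inter> J)"
  unfolding int_disjoint_def nondegenerate_def
proof
  assume "\<exists>x. I \<inter> J \<subseteq> {x}"
  then show "\<not> (\<exists>x y. x \<in> I \<inter> J \<and> y \<in> I \<inter> J \<and> x < y)"
    by (metis less_irrefl singletonD subsetD)
next
  assume "\<not> (\<exists>x y. x \<in> I \<inter> J \<and> y \<in> I \<inter> J \<and> x < y)"
  then have "\<forall>x\<in>I \<inter> J. \<forall>y\<in>I \<inter> J. x = y" by (meson linorder_neqE_linordered_idom)
  then show "\<exists>x. I \<inter> J \<subseteq> {x}" by blast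
qed

lemma int_disjoint_commute: "int_disjoint I J \<Longrightarrow> int_disjoint J I"
  unfolding int_disjoint_def by (metis Int_commute)

lemma int_disjoint_mono: "int_disjoint I J \<Longrightarrow> I' \<subseteq> I \<Longrightarrow> J' \<subseteq> J \<Longrightarrow> int_disjoint I' J'"
  unfolding int_disjoint_def by blast

lemma cake_interval_atLeastAtMost: "0 \<le> x \<Longrightarrow> y \<le> 1 \<Longrightarrow> cake_interval {x..y}"
  unfolding cake_interval_def by auto

lemma cake_interval_Int: "cake_interval I \<Longrightarrow> cake_interval J \<Longrightarrow> cake_interval (I \<inter> J)"
  unfolding cake_interval_def by (auto intro: is_interval_Int)

lemma cake_interval_bdd: "cake_interval I \<Longrightarrow> bdd_below I \<and> bdd_above I"
  unfolding cake_interval_def by (meson bdd_below_Icc bdd_above_Icc bdd_below_mono bdd_above_mono)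

lemma cake_interval_hull:
  assumes "cake_interval I" "I \<noteq> {}"
  shows "I \<subseteq> {Inf I..Sup I}" "{Inf I<..<Sup I} \<subseteq> I" "0 \<le> Inf I" "Sup I \<le> 1"
proof -
  have sub: "I \<subseteq> {0..1}" and iv: "is_interval I" using assms(1) unfolding cake_interval_def by auto
  have bdd: "bdd_below I" "bdd_above I" using cake_interval_bdd[OF assms(1)] by auto
  show "I \<subseteq> {Inf I..Sup I}" using bdd by (auto intro: cInf_lower cSup_upper)
  show "0 \<le> Inf I" using assms(2) sub by (intro cInf_greatest) auto
  show "Sup I \<le> 1" using assms(2) sub by (intro cSup_least) auto
  show "{Inf I<..<Sup I} \<subseteq> I"
  proof
    fix t assume t: "t \<in> {Inf I<..<Sup I}"
    obtain x where "x \<in> I" "x < t" using t assms(2) bdd by (meson cInf_less_iff greaterThanLessThan_iff)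
    moreover obtain y where "y \<in> I" "t < y" using t assms(2) bdd by (meson less_cSup_iff greaterThanLessThan_iff)
    ultimately show "t \<in> I" using iv unfolding is_interval_1 by (meson less_imp_le)
  qed
qed

lemma nondegenerate_iff_Inf_less_Sup:
  assumes "cake_interval I"
  shows "nondegenerate I \<longleftrightarrow> I \<noteq> {} \<and> Inf I < Sup I"
proof
  assume "nondegenerate I"
  then obtain x y where "x \<in> I" "y \<in> I" "x < y" unfolding nondegenerate_def by blast
  then show "I \<noteq> {} \<and> Inf I < Sup I"
    using cake_interval_bdd[OF assms] cInf_lower[of x I] cSup_upper[of y I] by auto
next
  assume "I \<noteq> {} \<and> Inf I < Sup I"
  then have "(2 * Inf I + Sup I) / 3 \<in> {Inf I<..<Sup I}" "(Inf I + 2 * Sup I) / 3 \<in> {Inf I<..<Sup I}"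
    by auto
  then have "(2 * Inf I + Sup I) / 3 \<in> I" "(Inf I + 2 * Sup I) / 3 \<in> I"
    using cake_interval_hull(2)[OF assms] \<open>I \<noteq> {} \<and> Inf I < Sup I\<close> by blast+
  moreover have "(2 * Inf I + Sup I) / 3 < (Inf I + 2 * Sup I) / 3"
    using \<open>I \<noteq> {} \<and> Inf I < Sup I\<close> by simp
  ultimately show "nondegenerate I" unfolding nondegenerate_def by blast
qed

lemma valuation_nonneg: "valuation v \<Longrightarrow> cake_interval I \<Longrightarrow> v I \<ge> 0"
  unfolding valuation_def by blast

lemma valuation_disjoint_Un:
  "valuation v \<Longrightarrow> cake_interval I \<Longrightarrow> cake_interval J \<Longrightarrow> cake_interval (I \<union> J) \<Longrightarrow>
    int_disjoint I J \<Longrightarrow> v (I \<union> J) = v I + v J"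
  unfolding valuation_def by blast

lemma valuation_divisible:
  assumes "valuation v" "0 \<le> x" "x \<le> y" "y \<le> 1" "0 \<le> l" "l \<le> 1"
  shows "\<exists>z. x \<le> z \<and> z \<le> y \<and> v {x..z} = l * v {x..y}"
  using assms unfolding valuation_def by (metis atLeastAtMost_iff)

lemma valuation_singleton:
  assumes "valuation v" "0 \<le> x" "x \<le> 1"
  shows "v {x} = 0"
proof -
  obtain z where "x \<le> z" "z \<le> x" "v {x..z} = 0 * v {x..x}"
    using valuation_divisible[OF assms(1,2) order_refl assms(3), of 0] by auto
  then show ?thesis by simp
qed

lemma valuation_empty: "valuation v \<Longrightarrow> v {} = 0"
  using valuation_disjoint_Un[of v "{}" "{0}"] cake_interval_atLeastAtMost[of 0 0]
  unfolding cake_interval_def int_disjoint_def by simp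

lemma valuation_split:
  assumes "valuation v" "0 \<le> x" "x \<le> y" "y \<le> z" "z \<le> 1"
  shows "v {x..z} = v {x..y} + v {y..z}"
proof -
  have "{x..y} \<union> {y..z} = {x..z}" using assms by auto
  moreover have "int_disjoint {x..y} {y..z}" unfolding int_disjoint_def by (intro exI[of _ y]) auto
  ultimately show ?thesis
    using valuation_disjoint_Un[OF assms(1)] cake_interval_atLeastAtMost assms by (metis order_trans)
qed

lemma valuation_atLeastAtMost_mono:
  assumes "valuation v" "0 \<le> x'" "x' \<le> x" "x \<le> y" "y \<le> y'" "y' \<le> 1"
  shows "v {x..y} \<le> v {x'..y'}"
proof -
  have "v {x'..y'} = v {x'..x} + (v {x..y} + v {y..y'})"
    using valuation_split[OF assms(1)] assms by (metis order_trans)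
  moreover have "v {x'..x} \<ge> 0" "v {y..y'} \<ge> 0"
    using valuation_nonneg[OF assms(1)] cake_interval_atLeastAtMost assms by auto
  ultimately show ?thesis by linarith
qed

lemma valuation_insert:
  assumes "valuation v" "cake_interval I" "cake_interval (insert x I)"
  shows "v (insert x I) = v I"
proof (cases "x \<in> I")
  case False
  have x: "0 \<le> x" "x \<le> 1" using assms(3) unfolding cake_interval_def by auto
  have "int_disjoint I {x}" unfolding int_disjoint_def by blast
  then have "v (I \<union> {x}) = v I + v {x}"
    using valuation_disjoint_Un[OF assms(1,2) cake_interval_atLeastAtMost[OF x]] assms(3) by simp
  then show ?thesis using valuation_singleton[OF assms(1) x] by simp
qed (simp add: insert_absorb)

lemma is_interval_between:
  fixes T :: "real set"
  assumes "{p<..<q} \<subseteq> T" "T \<subseteq> {p..q}"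
  shows "is_interval T"
  unfolding is_interval_1
  by (metis assms atLeastAtMost_iff greaterThanLessThan_iff order.order_iff_strict
      order_le_less_trans order_less_le_trans subsetD)

text \<open>Endpoints carry no value, so only the closed hull of a piece matters.\<close>
lemma valuation_hull:
  assumes "valuation v" "cake_interval I" "I \<noteq> {}"
  shows "v I = v {Inf I..Sup I}"
proof -
  note hull = cake_interval_hull[OF assms(2,3)]
  let ?p = "Inf I" and ?q = "Sup I"
  have hull_eq: "{?p..?q} = insert ?q (insert ?p I)"
  proof (intro set_eqI iffI)
    fix t assume "t \<in> {?p..?q}"
    then have "t = ?p \<or> t = ?q \<or> t \<in> {?p<..<?q}" by auto
    then show "t \<in> insert ?q (insert ?p I)" using hull(2) by blast
  qed (use hull(1) assms(3) in auto)
  have cake_p: "cake_interval (insert ?p I)"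
    unfolding cake_interval_def using hull assms(3)
    by (intro conjI is_interval_between[of ?p ?q]) fastforce+
  have "cake_interval (insert ?q (insert ?p I))"
    unfolding hull_eq[symmetric] using hull(3,4) by (rule cake_interval_atLeastAtMost)
  then have "v {?p..?q} = v (insert ?p I)"
    unfolding hull_eq by (rule valuation_insert[OF assms(1) cake_p])
  also have "\<dots> = v I" by (rule valuation_insert[OF assms(1,2) cake_p])
  finally show ?thesis ..
qed

lemma valuation_degenerate:
  assumes "valuation v" "cake_interval I" "\<not> nondegenerate I"
  shows "v I = 0"
proof (cases "I = {}")
  case False
  then have "Sup I = Inf I"
    using nondegenerate_iff_Inf_less_Sup[OF assms(2)] assms(3) cake_interval_hull[OF assms(2)] by force
  then show ?thesis
    using valuation_hull[OF assms(1,2) False] valuation_singleton[OF assms(1)] cake_interval_hull[OF assms(2) False]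
    by simp
qed (simp add: valuation_empty[OF assms(1)])

lemma valuation_mono:
  assumes "valuation v" "cake_interval I" "cake_interval J" "I \<subseteq> J"
  shows "v I \<le> v J"
proof (cases "I = {}")
  case False
  then have "J \<noteq> {}" using assms(4) by auto
  have "Inf J \<le> Inf I" "Sup I \<le> Sup J"
    using cInf_superset_mono[OF False _ assms(4)] cSup_subset_mono[OF False _ assms(4)]
      cake_interval_bdd[OF assms(3)] by auto
  moreover have "0 \<le> Inf J" "Inf I \<le> Sup I" "Sup J \<le> 1"
    using cake_interval_hull[OF assms(2) False] cake_interval_hull[OF assms(3) \<open>J \<noteq> {}\<close>] False
    by auto
  ultimately show ?thesis
    using valuation_hull[OF assms(1,2) False] valuation_hull[OF assms(1,3) \<open>J \<noteq> {}\<close>]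
      valuation_atLeastAtMost_mono[OF assms(1), of "Inf J" "Inf I" "Sup I" "Sup J"]
    by simp
qed (simp add: valuation_empty[OF assms(1)] valuation_nonneg[OF assms(1,3)])

lemma valuation_cover_atLeastAtMost:
  assumes val: "valuation v" and "finite K"
    and "0 \<le> p" "p \<le> q" "q \<le> 1" "\<forall>i\<in>K. 0 \<le> l i \<and> l i \<le> r i \<and> r i \<le> 1"
    and "{p..q} \<subseteq> (\<Union>i\<in>K. {l i..r i})"
  shows "v {p..q} \<le> (\<Sum>i\<in>K. v {l i..r i})"
  using assms(2-)
proof (induction K arbitrary: p q rule: finite_remove_induct)
  case (remove K)
  obtain j where j: "j \<in> K" "q \<in> {l j..r j}" using remove.prems by auto
  have sum_j: "(\<Sum>i\<in>K. v {l i..r i}) = v {l j..r j} + (\<Sum>i\<in>K-{j}. v {l i..r i})"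
    using j(1) remove.hyps(1) by (simp add: sum.remove)
  have rest_nonneg: "(\<Sum>i\<in>K-{j}. v {l i..r i}) \<ge> 0"
    using remove.prems(4) valuation_nonneg[OF val] cake_interval_atLeastAtMost by (auto intro: sum_nonneg)
  have lj: "0 \<le> l j" "l j \<le> r j" "r j \<le> 1" using remove.prems(4) j(1) by auto
  show ?case
  proof (cases "l j \<le> p")
    case True
    then have "v {p..q} \<le> v {l j..r j}"
      using valuation_atLeastAtMost_mono[OF val] remove.prems j lj by auto
    then show ?thesis using sum_j rest_nonneg by linarith
  next
    case False
    have "{p..<l j} \<subseteq> (\<Union>i\<in>K-{j}. {l i..r i})"
    proof
      fix x assume x: "x \<in> {p..<l j}"
      then obtain i where "i \<in> K" "x \<in> {l i..r i}" using remove.prems(5) j by force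
      moreover have "i \<noteq> j" using x calculation by auto
      ultimately show "x \<in> (\<Union>i\<in>K-{j}. {l i..r i})" by auto
    qed
    moreover have "closed (\<Union>i\<in>K-{j}. {l i..r i})" using remove.hyps(1) by (intro closed_UN) auto
    ultimately have "{p..l j} \<subseteq> (\<Union>i\<in>K-{j}. {l i..r i})"
      using closure_minimal[of "{p..<l j}"] False by simp
    then have "v {p..l j} \<le> (\<Sum>i\<in>K-{j}. v {l i..r i})"
      using remove.IH[OF j(1), of p "l j"] remove.prems False lj by auto
    moreover have "v {p..q} = v {p..l j} + v {l j..q}"
      using valuation_split[OF val] remove.prems j False by auto
    moreover have "v {l j..q} \<le> v {l j..r j}"
      using valuation_atLeastAtMost_mono[OF val] j lj by auto
    ultimately show ?thesis using sum_j by linarith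
  qed
qed simp

lemma valuation_subadditive:
  assumes val: "valuation v" and "finite K" and I: "cake_interval I"
    and J: "\<forall>i\<in>K. cake_interval (J i)" and cover: "I \<subseteq> (\<Union>i\<in>K. J i)"
  shows "v I \<le> (\<Sum>i\<in>K. v (J i))"
proof (cases "nondegenerate I")
  case False
  then show ?thesis
    using valuation_degenerate[OF val I] valuation_nonneg[OF val] J by (simp add: sum_nonneg)
next
  case True
  define K' where "K' = {i\<in>K. J i \<noteq> {}}"
  have "finite K'" using \<open>finite K\<close> unfolding K'_def by simp
  have hull: "J i \<subseteq> {Inf (J i)..Sup (J i)}" "0 \<le> Inf (J i)" "Inf (J i) \<le> Sup (J i)" "Sup (J i) \<le> 1"
    if "i \<in> K'" for i
  proof -
    have "cake_interval (J i)" "J i \<noteq> {}" using that J unfolding K'_def by auto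
    from cake_interval_hull[OF this] this(2) show
      "J i \<subseteq> {Inf (J i)..Sup (J i)}" "0 \<le> Inf (J i)" "Inf (J i) \<le> Sup (J i)" "Sup (J i) \<le> 1"
      by auto
  qed
  have "I \<noteq> {}" "Inf I < Sup I" using True nondegenerate_iff_Inf_less_Sup[OF I] by auto
  note hull_I = cake_interval_hull[OF I \<open>I \<noteq> {}\<close>]
  have "{Inf I<..<Sup I} \<subseteq> (\<Union>i\<in>K'. {Inf (J i)..Sup (J i)})"
  proof
    fix x assume "x \<in> {Inf I<..<Sup I}"
    then obtain i where "i \<in> K" "x \<in> J i" using hull_I(2) cover by blast
    then have "i \<in> K'" unfolding K'_def by auto
    with hull(1) \<open>x \<in> J i\<close> show "x \<in> (\<Union>i\<in>K'. {Inf (J i)..Sup (J i)})" by blast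
  qed
  moreover have "closed (\<Union>i\<in>K'. {Inf (J i)..Sup (J i)})" using \<open>finite K'\<close> by (intro closed_UN) auto
  ultimately have "{Inf I..Sup I} \<subseteq> (\<Union>i\<in>K'. {Inf (J i)..Sup (J i)})"
    using closure_minimal[of "{Inf I<..<Sup I}"] \<open>Inf I < Sup I\<close> by simp
  then have "v {Inf I..Sup I} \<le> (\<Sum>i\<in>K'. v {Inf (J i)..Sup (J i)})"
    using valuation_cover_atLeastAtMost[OF val \<open>finite K'\<close>] hull(2-4) hull_I \<open>Inf I < Sup I\<close> by simp
  also have "\<dots> = (\<Sum>i\<in>K'. v (J i))"
    using valuation_hull[OF val] J unfolding K'_def by simp
  also have "\<dots> = (\<Sum>i\<in>K. v (J i))"
    using \<open>finite K\<close> valuation_empty[OF val] unfolding K'_def by (intro sum.mono_neutral_left) auto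
  finally show ?thesis using valuation_hull[OF val I \<open>I \<noteq> {}\<close>] by simp
qed

lemma allocation_cake_interval: "allocation n A \<Longrightarrow> a < n \<Longrightarrow> cake_interval (A a)"
  unfolding allocation_def by blast

lemma allocation_int_disjoint:
  "allocation n A \<Longrightarrow> a < n \<Longrightarrow> b < n \<Longrightarrow> a \<noteq> b \<Longrightarrow> int_disjoint (A a) (A b)"
  unfolding allocation_def by blast

section \<open>Envy-freeness bounds the Nash welfare\<close>

text \<open>AM-GM, via \<open>1 + s \<le> exp s\<close>.\<close>
lemma prod_le_power_if_sum_le:
  fixes x :: "'i \<Rightarrow> real" and c :: real
  assumes "\<forall>i\<in>A. 0 \<le> x i" "(\<Sum>i\<in>A. x i) \<le> c * card A" "c > 0"
  shows "(\<Prod>i\<in>A. x i) \<le> c ^ card A"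
proof (cases "finite A")
  case True
  have tangent: "x i \<le> c * exp (x i / c - 1)" for i
    using mult_left_mono[OF exp_ge_add_one_self[of "x i / c - 1"], of c] \<open>c > 0\<close> by simp
  have "(\<Prod>i\<in>A. x i) \<le> (\<Prod>i\<in>A. c * exp (x i / c - 1))"
    using assms(1) tangent by (intro prod_mono) auto
  also have "\<dots> = c ^ card A * exp (\<Sum>i\<in>A. x i / c - 1)"
    by (simp add: prod.distrib exp_sum[OF True])
  also have "\<dots> = c ^ card A * exp ((\<Sum>i\<in>A. x i) / c - card A)"
    by (simp add: sum_subtractf sum_divide_distrib)
  also have "\<dots> \<le> c ^ card A"
    using assms(2,3) by (simp add: field_simps)
  finally show ?thesis .
qed simp

lemma Inf_Int_eq_Inf_either:
  fixes S T :: "real set"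
  assumes "is_interval S" "is_interval T" "S \<inter> T \<noteq> {}" "bdd_below S" "bdd_below T"
  shows "Inf (S \<inter> T) = Inf S \<or> Inf (S \<inter> T) = Inf T"
proof (rule ccontr)
  assume neither: "\<not> ?thesis"
  let ?m = "Inf (S \<inter> T)"
  have "Inf S \<le> ?m" "Inf T \<le> ?m"
    using cInf_superset_mono[OF assms(3) assms(4) Int_lower1]
      cInf_superset_mono[OF assms(3) assms(5) Int_lower2] by auto
  then have "Inf S < ?m" "Inf T < ?m" using neither by auto
  moreover have "S \<noteq> {}" "T \<noteq> {}" using assms(3) by auto
  ultimately obtain s t where s: "s \<in> S" "s < ?m" and t: "t \<in> T" "t < ?m"
    using cInf_less_iff assms(4,5) by metis
  obtain u where u: "u \<in> S \<inter> T" using assms(3) by auto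
  have bdd: "bdd_below (S \<inter> T)" using assms(4) by (meson bdd_below_mono inf_le1)
  have "?m \<le> u" using cInf_lower[OF u bdd] .
  then have "s \<le> max s t" "t \<le> max s t" "max s t \<le> u" using s t by auto
  then have "max s t \<in> S \<inter> T"
    using assms(1,2) s(1) t(1) u unfolding is_interval_1 by blast
  then have "?m \<le> max s t" using cInf_lower[OF _ bdd] by blast
  then show False using s t by linarith
qed

lemma nondegenerate_Int_if_Inf_eq:
  assumes "cake_interval S" "cake_interval T" "nondegenerate S" "nondegenerate T" "Inf S = Inf T"
  shows "nondegenerate (S \<inter> T)"
proof -
  define m y where "m = Inf S" and "y = min (Sup S) (Sup T)"
  have "S \<noteq> {}" "T \<noteq> {}" "m < y"
    using assms nondegenerate_iff_Inf_less_Sup unfolding m_def y_def by auto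
  then have "(2 * m + y) / 3 \<in> S \<inter> T" "(m + 2 * y) / 3 \<in> S \<inter> T"
    using cake_interval_hull(2)[OF assms(1)] cake_interval_hull(2)[OF assms(2)] assms(5)
    unfolding m_def y_def by (auto simp: subset_iff)
  moreover have "(2 * m + y) / 3 < (m + 2 * y) / 3" using \<open>m < y\<close> by simp
  ultimately show ?thesis unfolding nondegenerate_def by blast
qed

text \<open>A nondegenerate piece \<open>P a \<inter> Q b\<close> is determined by its left endpoint, which is the
  left endpoint of \<open>P a\<close> or of \<open>Q b\<close>.\<close>
lemma card_nondegenerate_intersections:
  fixes P Q :: "nat \<Rightarrow> real set"
  assumes P: "\<forall>a<m. cake_interval (P a)" "\<forall>a<m. \<forall>a'<m. a \<noteq> a' \<longrightarrow> int_disjoint (P a) (P a')"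
    and Q: "\<forall>b<n. cake_interval (Q b)" "\<forall>b<n. \<forall>b'<n. b \<noteq> b' \<longrightarrow> int_disjoint (Q b) (Q b')"
  shows "card {(a, b). a < m \<and> b < n \<and> nondegenerate (P a \<inter> Q b)} \<le> m + n"
proof -
  define X where "X = {(a, b). a < m \<and> b < n \<and> nondegenerate (P a \<inter> Q b)}"
  define g where "g = (\<lambda>(a, b). Inf (P a \<inter> Q b))"
  have "inj_on g X"
  proof (rule inj_onI)
    fix p p' assume "p \<in> X" "p' \<in> X" "g p = g p'"
    moreover obtain a b a' b' where "p = (a, b)" "p' = (a', b')" by fastforce
    ultimately have "(a, b) \<in> X" "(a', b') \<in> X" "g (a, b) = g (a', b')" by auto
    then have "nondegenerate ((P a \<inter> Q b) \<inter> (P a' \<inter> Q b'))"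
      using nondegenerate_Int_if_Inf_eq cake_interval_Int P(1) Q(1) unfolding X_def g_def by auto
    then have "nondegenerate (P a \<inter> P a')" "nondegenerate (Q b \<inter> Q b')"
      unfolding nondegenerate_def by blast+
    then have "a = a' \<and> b = b'"
      using P(2) Q(2) \<open>(a, b) \<in> X\<close> \<open>(a', b') \<in> X\<close> int_disjoint_iff_not_nondegenerate
      unfolding X_def by blast
    then show "p = p'" using \<open>p = (a, b)\<close> \<open>p' = (a', b')\<close> by simp
  qed
  moreover have "g ` X \<subseteq> (\<lambda>a. Inf (P a)) ` {..<m} \<union> (\<lambda>b. Inf (Q b)) ` {..<n}"
  proof (rule image_subsetI)
    fix p assume "p \<in> X"
    moreover obtain a b where "p = (a, b)" by fastforce
    ultimately have "(a, b) \<in> X" by simp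
    then have "P a \<inter> Q b \<noteq> {}" "is_interval (P a)" "is_interval (Q b)"
      "bdd_below (P a)" "bdd_below (Q b)" "a < m" "b < n"
      using P(1) Q(1) cake_interval_bdd unfolding X_def nondegenerate_def cake_interval_def by auto
    then have "g p = Inf (P a) \<or> g p = Inf (Q b)"
      using Inf_Int_eq_Inf_either \<open>p = (a, b)\<close> unfolding g_def by simp
    then show "g p \<in> (\<lambda>a. Inf (P a)) ` {..<m} \<union> (\<lambda>b. Inf (Q b)) ` {..<n}"
      using \<open>a < m\<close> \<open>b < n\<close> by blast
  qed
  ultimately have "card X \<le> card ((\<lambda>a. Inf (P a)) ` {..<m} \<union> (\<lambda>b. Inf (Q b)) ` {..<n})"
    by (simp add: card_image[symmetric] card_mono)
  also have "\<dots> \<le> card ((\<lambda>a. Inf (P a)) ` {..<m}) + card ((\<lambda>b. Inf (Q b)) ` {..<n})"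
    by (rule card_Un_le)
  also have "\<dots> \<le> m + n"
    by (intro add_mono) (metis card_image_le card_lessThan finite_lessThan)+
  finally show ?thesis unfolding X_def .
qed

lemma approx_EF_le: "approx_EF n v \<alpha> A \<Longrightarrow> \<alpha> > 0 \<Longrightarrow> a < n \<Longrightarrow> b < n \<Longrightarrow> v a (A b) \<le> \<alpha> * v a (A a)"
  unfolding approx_EF_def by (auto simp: field_simps)

lemma value_le_card_mult_of_approx_EF:
  fixes v :: "nat \<Rightarrow> real set \<Rightarrow> real" and \<alpha> :: real
  assumes val: "valuation (v a)" and "\<alpha> > 0" "a < n"
    and E: "allocation n E" "approx_EF n v \<alpha> E" and I: "cake_interval I"
  shows "v a I \<le> card {b. b < n \<and> nondegenerate (I \<inter> E b)} * (\<alpha> * v a (E a))"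
proof -
  define K where "K = {b. b < n \<and> nondegenerate (I \<inter> E b)}"
  have cake: "\<And>b. b < n \<Longrightarrow> cake_interval (I \<inter> E b)"
    using cake_interval_Int[OF I] allocation_cake_interval[OF E(1)] by blast
  have "I \<subseteq> (\<Union>b<n. E b)"
    using I E(1) unfolding cake_interval_def allocation_def by simp
  then have "I \<subseteq> (\<Union>b\<in>{..<n}. I \<inter> E b)" by blast
  then have "v a I \<le> (\<Sum>b<n. v a (I \<inter> E b))"
    using valuation_subadditive[OF val finite_lessThan[of n] I, of "\<lambda>b. I \<inter> E b"] cake by auto
  also have "\<dots> = (\<Sum>b\<in>K. v a (I \<inter> E b))"
    using valuation_degenerate[OF val cake] unfolding K_def by (intro sum.mono_neutral_right) auto
  also have "\<dots> \<le> (\<Sum>b\<in>K. \<alpha> * v a (E a))"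
  proof (rule sum_mono)
    fix b assume "b \<in> K"
    then have "b < n" unfolding K_def by auto
    then have "v a (I \<inter> E b) \<le> v a (E b)"
      by (intro valuation_mono[OF val cake allocation_cake_interval[OF E(1)]]) auto
    also have "\<dots> \<le> \<alpha> * v a (E a)" using approx_EF_le[OF E(2)] \<open>\<alpha> > 0\<close> \<open>a < n\<close> \<open>b < n\<close> .
    finally show "v a (I \<inter> E b) \<le> \<alpha> * v a (E a)" .
  qed
  finally show ?thesis unfolding K_def by simp
qed

lemma prod_values_le_of_approx_EF:
  fixes v :: "nat \<Rightarrow> real set \<Rightarrow> real" and \<alpha> :: real
  assumes val: "\<forall>a<n. valuation (v a)" and "\<alpha> > 0"
    and E: "allocation n E" "approx_EF n v \<alpha> E" and A: "allocation n A"
  shows "(\<Prod>a<n. v a (A a)) \<le> (2 * \<alpha>) ^ n * (\<Prod>a<n. v a (E a))"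
proof -
  define k where "k a = card {b. b < n \<and> nondegenerate (A a \<inter> E b)}" for a
  have "(\<Sum>a<n. k a) = card (SIGMA a:{..<n}. {b. b < n \<and> nondegenerate (A a \<inter> E b)})"
    unfolding k_def by (simp add: card_SigmaI)
  also have "(SIGMA a:{..<n}. {b. b < n \<and> nondegenerate (A a \<inter> E b)}) =
      {(a, b). a < n \<and> b < n \<and> nondegenerate (A a \<inter> E b)}" by auto
  also have "card \<dots> \<le> n + n"
    using A E(1) unfolding allocation_def by (intro card_nondegenerate_intersections) auto
  finally have "(\<Prod>a<n. real (k a)) \<le> 2 ^ n"
    using prod_le_power_if_sum_le[of "{..<n}" "\<lambda>a. real (k a)" 2]
    by (simp flip: of_nat_sum)
  have E_nonneg: "\<And>a. a < n \<Longrightarrow> v a (E a) \<ge> 0"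
    using val valuation_nonneg allocation_cake_interval[OF E(1)] by blast
  have "(\<Prod>a<n. v a (A a)) \<le> (\<Prod>a<n. k a * (\<alpha> * v a (E a)))"
    using value_le_card_mult_of_approx_EF[OF _ \<open>\<alpha> > 0\<close> _ E] allocation_cake_interval[OF A]
      valuation_nonneg val unfolding k_def by (intro prod_mono) auto
  also have "\<dots> = (\<Prod>a<n. real (k a)) * \<alpha> ^ n * (\<Prod>a<n. v a (E a))"
    by (simp add: prod.distrib)
  also have "\<dots> \<le> 2 ^ n * \<alpha> ^ n * (\<Prod>a<n. v a (E a))"
    using \<open>(\<Prod>a<n. real (k a)) \<le> 2 ^ n\<close> \<open>\<alpha> > 0\<close> E_nonneg
    by (intro mult_right_mono prod_nonneg) auto
  finally show ?thesis by (simp add: power_mult_distrib)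
qed

lemma NSW_le_of_approx_EF:
  fixes v :: "nat \<Rightarrow> real set \<Rightarrow> real" and \<alpha> :: real
  assumes val: "\<forall>a<n. valuation (v a)" and "\<alpha> > 0" and "n > 0"
    and "allocation n E" "approx_EF n v \<alpha> E" "allocation n A"
  shows "NSW n v A \<le> 2 * \<alpha> * NSW n v E"
proof -
  have "NSW n v A \<le> root n ((2 * \<alpha>) ^ n * (\<Prod>a<n. v a (E a)))"
    unfolding NSW_def using prod_values_le_of_approx_EF[OF assms(1,2,4-)] \<open>n > 0\<close> by simp
  also have "\<dots> = root n ((2 * \<alpha>) ^ n) * NSW n v E"
    unfolding NSW_def by (rule real_root_mult)
  also have "root n ((2 * \<alpha>) ^ n) = 2 * \<alpha>"
    using \<open>n > 0\<close> \<open>\<alpha> > 0\<close> by (intro real_root_power_cancel) auto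
  finally show ?thesis .
qed

section \<open>Nash optimal allocations are nearly envy-free\<close>

text \<open>Cut at the leftmost of the agents' half-way points.\<close>
lemma exists_cut_valued_on_both_sides:
  fixes v :: "nat \<Rightarrow> real set \<Rightarrow> real"
  assumes val: "\<forall>a\<in>S. valuation (v a)" and "finite S" "S \<noteq> {}" "0 \<le> x" "x \<le> 1"
    and pos: "\<forall>a\<in>S. v a {x..1} > 0"
  shows "\<exists>a0\<in>S. \<exists>m. x \<le> m \<and> m \<le> 1 \<and> v a0 {x..m} > 0 \<and> (\<forall>b\<in>S. v b {m..1} > 0)"
proof -
  have "\<exists>z. x \<le> z \<and> z \<le> 1 \<and> v a {x..z} = 1/2 * v a {x..1}" if "a \<in> S" for a
  proof -
    have "valuation (v a)" using val that by blast
    then show ?thesis using valuation_divisible[of "v a" x 1 "1/2"] assms(4,5) by auto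
  qed
  then obtain z where z: "\<And>a. a \<in> S \<Longrightarrow> x \<le> z a \<and> z a \<le> 1 \<and> v a {x..z a} = 1/2 * v a {x..1}"
    by metis
  define m where "m = Min (z ` S)"
  have "m \<in> z ` S" unfolding m_def using assms(2,3) by (intro Min_in) auto
  then obtain a0 where a0: "a0 \<in> S" "z a0 = m" by auto
  have m: "x \<le> m" "m \<le> 1" using z[OF a0(1)] a0(2) by auto
  have "v b {m..1} > 0" if "b \<in> S" for b
  proof -
    have vb: "valuation (v b)" and zb: "x \<le> z b" "z b \<le> 1" "v b {x..z b} = 1/2 * v b {x..1}"
      using val z[OF that] that by auto
    have "v b {x..1} = v b {x..z b} + v b {z b..1}"
      using valuation_split[OF vb assms(4) zb(1,2) order_refl] .
    then have "v b {z b..1} > 0" using zb(3) pos that by auto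
    moreover have "m \<le> z b" unfolding m_def using assms(2) that by auto
    then have "v b {z b..1} \<le> v b {m..1}"
      using valuation_atLeastAtMost_mono[OF vb] zb m assms(4) by auto
    ultimately show ?thesis by linarith
  qed
  moreover have "v a0 {x..m} > 0" using z[OF a0(1)] a0 pos by auto
  ultimately show ?thesis using a0(1) m by blast
qed

lemma exists_positive_partition:
  fixes v :: "nat \<Rightarrow> real set \<Rightarrow> real"
  assumes "\<forall>a\<in>S. valuation (v a)" "finite S" "S \<noteq> {}" "0 \<le> x" "x \<le> 1" "\<forall>a\<in>S. v a {x..1} > 0"
  shows "\<exists>B. (\<forall>a\<in>S. cake_interval (B a)) \<and> (\<forall>a\<in>S. \<forall>b\<in>S. a \<noteq> b \<longrightarrow> int_disjoint (B a) (B b)) \<and>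
    (\<Union>a\<in>S. B a) = {x..1} \<and> (\<forall>a\<in>S. v a (B a) > 0)"
  using assms
proof (induction "card S" arbitrary: S x rule: less_induct)
  case less
  show ?case
  proof (cases "\<exists>a. S = {a}")
    case True
    then show ?thesis
      using less.prems by (intro exI[of _ "\<lambda>_. {x..1}"]) (auto intro: cake_interval_atLeastAtMost)
  next
    case False
    obtain a0 m where a0: "a0 \<in> S" "x \<le> m" "m \<le> 1" "v a0 {x..m} > 0" "\<forall>b\<in>S. v b {m..1} > 0"
      using exists_cut_valued_on_both_sides[OF less.prems] by blast
    define S' where "S' = S - {a0}"
    have S: "S = insert a0 S'" "a0 \<notin> S'" "S' \<noteq> {}" using False a0(1) unfolding S'_def by auto
    have "card S' < card S" using card_Diff1_less[OF less.prems(2) a0(1)] unfolding S'_def .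
    moreover have "\<forall>a\<in>S'. valuation (v a)" "finite S'" "0 \<le> m" "\<forall>b\<in>S'. v b {m..1} > 0"
      using less.prems(1,2,4) a0(2,5) unfolding S'_def by auto
    ultimately obtain B where B: "\<forall>a\<in>S'. cake_interval (B a)"
      "\<forall>a\<in>S'. \<forall>b\<in>S'. a \<noteq> b \<longrightarrow> int_disjoint (B a) (B b)" "(\<Union>a\<in>S'. B a) = {m..1}"
      "\<forall>a\<in>S'. v a (B a) > 0"
      using less.hyps[of S' m] S(3) a0(3) by blast
    have disj: "int_disjoint {x..m} (B b)" if "b \<in> S'" for b
    proof -
      have "B b \<subseteq> {m..1}" using B(3) that by blast
      then show ?thesis unfolding int_disjoint_def by (intro exI[of _ m]) auto
    qed
    define B0 where "B0 = B(a0 := {x..m})"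
    have B0: "B0 a0 = {x..m}" "\<And>b. b \<in> S' \<Longrightarrow> B0 b = B b" unfolding B0_def using S(2) by auto
    have "\<forall>a\<in>S. cake_interval (B0 a)"
      using B(1) B0 a0(2,3) less.prems(4) S(1) by (auto intro: cake_interval_atLeastAtMost)
    moreover have "\<forall>a\<in>S. \<forall>b\<in>S. a \<noteq> b \<longrightarrow> int_disjoint (B0 a) (B0 b)"
      using B(2) B0 disj int_disjoint_commute unfolding S(1) by auto
    moreover have "(\<Union>a\<in>S. B0 a) = {x..m} \<union> {m..1}" using B(3) B0 unfolding S(1) by auto
    moreover have "{x..m} \<union> {m..1} = {x..1}" using a0(2,3) by auto
    moreover have "\<forall>a\<in>S. v a (B0 a) > 0" using B(4) B0 a0(4) unfolding S(1) by auto
    ultimately show ?thesis by metis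
  qed
qed

lemma exists_positive_allocation:
  fixes v :: "nat \<Rightarrow> real set \<Rightarrow> real"
  assumes "\<forall>a<n. valuation (v a)" "n > 0"
  shows "\<exists>B. allocation n B \<and> (\<forall>a<n. v a (B a) > 0)"
proof -
  have "\<forall>a\<in>{..<n}. v a {0..1} > 0" using assms(1) unfolding valuation_def by simp
  moreover have "{..<n} \<noteq> {}" using assms(2) by auto
  ultimately show ?thesis
    using exists_positive_partition[of "{..<n}" v 0] assms(1) unfolding allocation_def by auto
qed

lemma nash_optimal_values_pos:
  fixes v :: "nat \<Rightarrow> real set \<Rightarrow> real"
  assumes val: "\<forall>a<n. valuation (v a)" and "nash_optimal n v A" "a < n"
  shows "v a (A a) > 0"
proof -
  obtain B where B: "allocation n B" "\<forall>a<n. v a (B a) > 0"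
    using exists_positive_allocation[OF val] \<open>a < n\<close> by auto
  have "0 < NSW n v B" unfolding NSW_def using B(2) \<open>a < n\<close> by (intro real_root_gt_zero prod_pos) auto
  also have "NSW n v B \<le> NSW n v A" using assms(2) B(1) unfolding nash_optimal_def by auto
  finally have "0 < (\<Prod>d<n. v d (A d))" unfolding NSW_def using \<open>a < n\<close> by simp
  then have "v a (A a) \<noteq> 0" using \<open>a < n\<close> by (metis finite_lessThan lessThan_iff less_irrefl prod_zero)
  moreover have "v a (A a) \<ge> 0"
    using valuation_nonneg val allocation_cake_interval assms(2,3) unfolding nash_optimal_def by blast
  ultimately show ?thesis by simp
qed

lemma int_disjoint_hull:
  assumes "cake_interval I" "cake_interval J" "nondegenerate I" "nondegenerate J" "int_disjoint I J"
  shows "int_disjoint {Inf I..Sup I} {Inf J..Sup J}"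
proof -
  have "I \<noteq> {}" "J \<noteq> {}" using assms(1-4) nondegenerate_iff_Inf_less_Sup by auto
  have "nondegenerate (I \<inter> J)" if hull: "nondegenerate ({Inf I..Sup I} \<inter> {Inf J..Sup J})"
  proof -
    obtain x y where "x \<in> {Inf I..Sup I} \<inter> {Inf J..Sup J}" "y \<in> {Inf I..Sup I} \<inter> {Inf J..Sup J}" "x < y"
      using hull unfolding nondegenerate_def by blast
    then have "(2 * x + y) / 3 \<in> {Inf I<..<Sup I} \<inter> {Inf J<..<Sup J}"
      "(x + 2 * y) / 3 \<in> {Inf I<..<Sup I} \<inter> {Inf J<..<Sup J}" by auto
    moreover have "(2 * x + y) / 3 < (x + 2 * y) / 3" using \<open>x < y\<close> by simp
    ultimately show ?thesis
      using cake_interval_hull(2)[OF assms(1) \<open>I \<noteq> {}\<close>] cake_interval_hull(2)[OF assms(2) \<open>J \<noteq> {}\<close>]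
      unfolding nondegenerate_def by blast
  qed
  then show ?thesis using assms(5) unfolding int_disjoint_iff_not_nondegenerate by blast
qed

lemma allocation_hull:
  assumes "allocation n A" "\<forall>d<n. nondegenerate (A d)"
  shows "allocation n (\<lambda>d. {Inf (A d)..Sup (A d)})"
proof -
  have hull: "A d \<subseteq> {Inf (A d)..Sup (A d)}" "0 \<le> Inf (A d)" "Sup (A d) \<le> 1" if "d < n" for d
    using cake_interval_hull[OF allocation_cake_interval[OF assms(1) that]] assms(2) that
      nondegenerate_iff_Inf_less_Sup allocation_cake_interval[OF assms(1)] by auto
  have "{0..1} = (\<Union>d<n. A d)" using assms(1) unfolding allocation_def by simp
  also have "\<dots> \<subseteq> (\<Union>d<n. {Inf (A d)..Sup (A d)})" using hull(1) by blast
  also have "\<dots> \<subseteq> {0..1}"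
  proof (intro UN_least)
    fix d assume "d \<in> {..<n}"
    then show "{Inf (A d)..Sup (A d)} \<subseteq> {0..1}" using hull(2,3)[of d] by auto
  qed
  finally show ?thesis
    using hull(2,3) int_disjoint_hull allocation_cake_interval[OF assms(1)]
      allocation_int_disjoint[OF assms(1)] assms(2)
    unfolding allocation_def by (auto intro: cake_interval_atLeastAtMost)
qed

lemma int_disjoint_Un:
  assumes "is_interval C" "is_interval (P \<union> Q)" "int_disjoint C P" "int_disjoint C Q"
  shows "int_disjoint C (P \<union> Q)"
proof -
  obtain p q where "C \<inter> P \<subseteq> {p}" "C \<inter> Q \<subseteq> {q}" using assms(3,4) unfolding int_disjoint_def by blast
  then have sub: "C \<inter> (P \<union> Q) \<subseteq> {p, q}" by blast
  have "\<not> nondegenerate (C \<inter> (P \<union> Q))"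
  proof
    assume "nondegenerate (C \<inter> (P \<union> Q))"
    then obtain x y where xy: "x \<in> C \<inter> (P \<union> Q)" "y \<in> C \<inter> (P \<union> Q)" "x < y"
      unfolding nondegenerate_def by blast
    moreover have "x \<le> (x + y) / 2" "(x + y) / 2 \<le> y" using \<open>x < y\<close> by auto
    ultimately have "(x + y) / 2 \<in> C \<inter> (P \<union> Q)"
      using is_interval_Int[OF assms(1,2)] unfolding is_interval_1 by blast
    then have "x \<in> {p, q}" "(x + y) / 2 \<in> {p, q}" "y \<in> {p, q}" using sub xy by blast+
    moreover have "x < (x + y) / 2" "(x + y) / 2 < y" using \<open>x < y\<close> by auto
    ultimately show False by auto
  qed
  then show ?thesis unfolding int_disjoint_iff_not_nondegenerate .
qed

lemma allocation_redivide:
  assumes A: "allocation n A" and ab: "a < n" "b < n" "a \<noteq> b"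
    and "is_interval (A a \<union> A b)" "P \<union> Q = A a \<union> A b" "int_disjoint P Q"
    and "cake_interval P" "cake_interval Q"
  shows "allocation n (A(a := P, b := Q))"
proof -
  have "int_disjoint (A d) (A a \<union> A b)" if "d < n" "d \<noteq> a" "d \<noteq> b" for d
    using int_disjoint_Un[OF _ assms(5)] allocation_int_disjoint[OF A] allocation_cake_interval[OF A]
      that ab unfolding cake_interval_def by blast
  then have "int_disjoint (A d) P" "int_disjoint (A d) Q" if "d < n" "d \<noteq> a" "d \<noteq> b" for d
    using int_disjoint_mono assms(6) that by blast+
  moreover have "(\<Union>d<n. (A(a := P, b := Q)) d) = (\<Union>d<n. A d)"
    using assms(6) ab by (auto split: if_splits)
  ultimately show ?thesis
    using A assms(7-) ab int_disjoint_commute unfolding allocation_def by auto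
qed

lemma closed_cake_interval_eq_atLeastAtMost:
  assumes "cake_interval I" "closed I" "I \<noteq> {}"
  obtains u w where "0 \<le> u" "u \<le> w" "w \<le> 1" "I = {u..w}"
proof -
  have "I \<subseteq> {0..1}" "is_interval I" using assms(1) unfolding cake_interval_def by auto
  then have "compact I" "connected I"
    using assms(2) compact_Icc compact_Int_closed[of "{0..1}" I] is_interval_connected_1
    by (auto simp: Int_absorb1)
  then obtain u w where "I = {u..w}" using connected_compact_interval_1 by blast
  then show ?thesis using that assms(3) \<open>I \<subseteq> {0..1}\<close> by auto
qed

text \<open>Cut where agent \<open>b\<close> sees half of the interval; agent \<open>a\<close> chooses the side she prefers.\<close>
lemma halving_partition:
  assumes va: "valuation va" and vb: "valuation vb"
    and I: "cake_interval I" "closed I" "I \<noteq> {}"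
  shows "\<exists>P Q. P \<union> Q = I \<and> int_disjoint P Q \<and> cake_interval P \<and> cake_interval Q \<and>
    va P \<ge> va I / 2 \<and> vb Q \<ge> vb I / 2"
proof -
  obtain u w where uw: "0 \<le> u" "u \<le> w" "w \<le> 1" "I = {u..w}"
    using closed_cake_interval_eq_atLeastAtMost[OF I] .
  obtain z where z: "u \<le> z" "z \<le> w" "vb {u..z} = 1/2 * vb {u..w}"
    using valuation_divisible[OF vb uw(1-3), of "1/2"] by auto
  have split: "va {u..w} = va {u..z} + va {z..w}" "vb {u..w} = vb {u..z} + vb {z..w}"
    using valuation_split[OF va uw(1) z(1,2) uw(3)] valuation_split[OF vb uw(1) z(1,2) uw(3)] by auto
  have parts: "{u..z} \<union> {z..w} = I" "int_disjoint {u..z} {z..w}"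
    "cake_interval {u..z}" "cake_interval {z..w}"
    using z uw(1-4) cake_interval_atLeastAtMost[of u z] cake_interval_atLeastAtMost[of z w]
    unfolding int_disjoint_def by (auto intro: exI[of _ z])
  show ?thesis
  proof (cases "va {u..z} \<ge> va {u..w} / 2")
    case True
    moreover have "vb {z..w} \<ge> vb {u..w} / 2" using split(2) z(3) by simp
    ultimately show ?thesis using parts unfolding uw(4) by blast
  next
    case False
    then have "va {z..w} \<ge> va {u..w} / 2" using split(1) by simp
    moreover have "{z..w} \<union> {u..z} = I" "int_disjoint {z..w} {u..z}"
      using parts int_disjoint_commute by auto
    moreover have "vb {u..z} \<ge> vb {u..w} / 2" using z(3) by simp
    ultimately show ?thesis using parts unfolding uw(4) by blast
  qed
qed

lemma allocation_touching_piece: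
  assumes H: "allocation n H" "\<forall>d<n. closed (H d)"
    and "a < n" "b < n" "a \<noteq> b" "H a \<noteq> {}" "H b \<noteq> {}"
  shows "\<exists>c<n. c \<noteq> a \<and> H a \<inter> H c \<noteq> {}"
proof (rule ccontr)
  assume no_touch: "\<not> (\<exists>c<n. c \<noteq> a \<and> H a \<inter> H c \<noteq> {})"
  define U where "U = (\<Union>d\<in>{d. d < n \<and> d \<noteq> a}. H d)"
  have "H a \<subseteq> {0..1}" "H b \<subseteq> {0..1}" "H b \<subseteq> U"
    using H(1) assms(3-5) unfolding U_def allocation_def by auto
  then have "H a \<inter> {0..1} \<noteq> {}" "U \<inter> {0..1} \<noteq> {}" using assms(6,7) by blast+
  moreover have "{0..1} \<subseteq> H a \<union> U" "H a \<inter> U \<inter> {0..1} = {}"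
    using H(1) no_touch unfolding U_def allocation_def by auto
  moreover have "closed (H a)" "closed U" unfolding U_def using H(2) assms(3) by (auto intro: closed_UN)
  ultimately have "\<exists>A B. closed A \<and> closed B \<and> {0..1::real} \<subseteq> A \<union> B \<and> A \<inter> B \<inter> {0..1} = {} \<and>
      A \<inter> {0..1} \<noteq> {} \<and> B \<inter> {0..1} \<noteq> {}"
    by (intro exI[of _ "H a"] exI[of _ U]) simp
  then show False using connected_Icc[of "0::real" 1] unfolding connected_closed by blast
qed

lemma cake_interval_Un:
  assumes "cake_interval I" "cake_interval J" "I \<inter> J \<noteq> {}"
  shows "cake_interval (I \<union> J)"
  using assms connected_Un[of I J] unfolding cake_interval_def is_interval_connected_1 by auto

lemma exists_allocation_halving_two_pieces:
  assumes va: "valuation (v a)" and vb: "valuation (v b)"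
    and H: "allocation n H" and ab: "a < n" "b < n" "a \<noteq> b"
    and U: "is_interval (H a \<union> H b)" "closed (H a \<union> H b)" "H a \<union> H b \<noteq> {}"
  shows "\<exists>B. allocation n B \<and> v a (B a) \<ge> v a (H a \<union> H b) / 2 \<and> v b (B b) \<ge> v b (H a \<union> H b) / 2 \<and>
    (\<forall>d. d \<noteq> a \<longrightarrow> d \<noteq> b \<longrightarrow> B d = H d)"
proof -
  have "cake_interval (H a \<union> H b)"
    using U(1) allocation_cake_interval[OF H] ab unfolding cake_interval_def by blast
  then obtain P Q where PQ: "P \<union> Q = H a \<union> H b" "int_disjoint P Q" "cake_interval P" "cake_interval Q"
    "v a P \<ge> v a (H a \<union> H b) / 2" "v b Q \<ge> v b (H a \<union> H b) / 2"
    using halving_partition[OF va vb _ U(2,3)] by blast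
  have "allocation n (H(a := P, b := Q))" using allocation_redivide[OF H ab U(1) PQ(1-4)] .
  then show ?thesis using PQ(5,6) \<open>a \<noteq> b\<close> by (intro exI[of _ "H(a := P, b := Q)"]) simp
qed

text \<open>If the pieces of \<open>a\<close> and \<open>b\<close> do not touch, \<open>a\<close> first hands her piece to a touching
  neighbour \<open>c \<noteq> b\<close>.\<close>
lemma exists_allocation_halving_piece:
  fixes v :: "nat \<Rightarrow> real set \<Rightarrow> real"
  assumes val: "\<forall>d<n. valuation (v d)"
    and H: "allocation n H" "\<forall>d<n. closed (H d) \<and> H d \<noteq> {}"
    and ab: "a < n" "b < n" "a \<noteq> b"
  shows "\<exists>B. allocation n B \<and> v a (B a) \<ge> v a (H b) / 2 \<and> v b (B b) \<ge> v b (H b) / 2 \<and>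
    (\<forall>d<n. d \<noteq> a \<longrightarrow> d \<noteq> b \<longrightarrow> v d (B d) \<ge> v d (H d))"
proof -
  have cake: "\<And>d. d < n \<Longrightarrow> cake_interval (H d)" using allocation_cake_interval[OF H(1)] .
  have va: "valuation (v a)" and vb: "valuation (v b)" using val ab by auto
  show ?thesis
  proof (cases "H a \<inter> H b = {}")
    case False
    then have "cake_interval (H a \<union> H b)" using cake_interval_Un cake ab by blast
    moreover have "closed (H a \<union> H b)" "H a \<union> H b \<noteq> {}" using H(2) ab by auto
    ultimately obtain B where B: "allocation n B" "v a (B a) \<ge> v a (H a \<union> H b) / 2"
      "v b (B b) \<ge> v b (H a \<union> H b) / 2" "\<forall>d. d \<noteq> a \<longrightarrow> d \<noteq> b \<longrightarrow> B d = H d"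
      using exists_allocation_halving_two_pieces[OF va vb H(1) ab] unfolding cake_interval_def by blast
    moreover have "v a (H b) \<le> v a (H a \<union> H b)" "v b (H b) \<le> v b (H a \<union> H b)"
      using valuation_mono[OF va cake[OF ab(2)]] valuation_mono[OF vb cake[OF ab(2)]]
        \<open>cake_interval (H a \<union> H b)\<close> by auto
    ultimately show ?thesis by (intro exI[of _ B]) auto
  next
    case True
    have closed: "\<forall>d<n. closed (H d)" using H(2) by blast
    obtain c where c: "c < n" "c \<noteq> a" "H a \<inter> H c \<noteq> {}"
      using allocation_touching_piece[OF H(1) closed ab] H(2) ab(1,2) by blast
    then have "c \<noteq> b" using True by auto
    define H' where "H' = H(a := {}, c := H a \<union> H c)"
    have U: "cake_interval (H a \<union> H c)" using cake_interval_Un[OF cake[OF ab(1)] cake[OF c(1)] c(3)] .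
    moreover have "int_disjoint {} (H a \<union> H c)" "cake_interval {}"
      unfolding int_disjoint_def cake_interval_def by auto
    ultimately have "allocation n H'"
      unfolding H'_def using allocation_redivide[OF H(1) ab(1) c(1) c(2)[symmetric]]
      unfolding cake_interval_def by simp
    moreover have "H' a \<union> H' b = H b" unfolding H'_def using \<open>c \<noteq> b\<close> ab(3) c(2) by simp
    ultimately obtain B where B: "allocation n B" "v a (B a) \<ge> v a (H b) / 2" "v b (B b) \<ge> v b (H b) / 2"
      "\<forall>d. d \<noteq> a \<longrightarrow> d \<noteq> b \<longrightarrow> B d = H' d"
      using exists_allocation_halving_two_pieces[OF va vb _ ab, of H'] cake[OF ab(2)] H(2) ab(2)
      unfolding cake_interval_def by auto
    moreover have "v c (H c) \<le> v c (H a \<union> H c)"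
      using valuation_mono[OF _ cake[OF c(1)] U] val c(1) by blast
    ultimately show ?thesis
      using \<open>c \<noteq> b\<close> c(2) by (intro exI[of _ B]) (auto simp: H'_def)
  qed
qed

lemma NSW_less_if_two_agents_improve:
  fixes v :: "nat \<Rightarrow> real set \<Rightarrow> real"
  assumes pos: "\<forall>d<n. v d (A d) > 0" and ab: "a < n" "b < n" "a \<noteq> b"
    and "v a (B a) > 2 * v a (A a)" "v b (B b) \<ge> v b (A b) / 2"
    and others: "\<forall>d<n. d \<noteq> a \<longrightarrow> d \<noteq> b \<longrightarrow> v d (B d) \<ge> v d (A d)"
  shows "NSW n v A < NSW n v B"
proof -
  define R where "R = {..<n} - {a} - {b}"
  have split: "(\<Prod>d<n. v d (C d)) = v a (C a) * v b (C b) * (\<Prod>d\<in>R. v d (C d))" for C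
    unfolding R_def using ab
    by (simp add: prod.remove[of "{..<n}" a] prod.remove[of "{..<n} - {a}" b] mult.assoc)
  have "0 < v a (A a)" "0 < v b (A b)" using pos ab by auto
  have "v a (A a) * v b (A b) = (2 * v a (A a)) * (v b (A b) / 2)" by simp
  also have "\<dots> < v a (B a) * v b (B b)"
    by (rule mult_less_le_imp_less) (use assms(5,6) \<open>0 < v a (A a)\<close> \<open>0 < v b (A b)\<close> in auto)
  finally have pair: "v a (A a) * v b (A b) < v a (B a) * v b (B b)" .
  have rest: "(\<Prod>d\<in>R. v d (A d)) \<le> (\<Prod>d\<in>R. v d (B d))" "0 < (\<Prod>d\<in>R. v d (A d))"
    using pos others unfolding R_def by (auto intro!: prod_mono prod_pos simp: less_imp_le)
  have "0 \<le> v a (A a) * v b (A b)" using \<open>0 < v a (A a)\<close> \<open>0 < v b (A b)\<close> by simp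
  from mult_less_le_imp_less[OF pair rest(1) this rest(2)]
  have "v a (A a) * v b (A b) * (\<Prod>d\<in>R. v d (A d)) < v a (B a) * v b (B b) * (\<Prod>d\<in>R. v d (B d))" .
  then have "(\<Prod>d<n. v d (A d)) < (\<Prod>d<n. v d (B d))" unfolding split .
  then show ?thesis unfolding NSW_def using ab by (intro real_root_less_mono) auto
qed

lemma nash_optimal_approx_EF_4:
  fixes v :: "nat \<Rightarrow> real set \<Rightarrow> real"
  assumes val: "\<forall>a<n. valuation (v a)" and opt: "nash_optimal n v A"
  shows "approx_EF n v 4 A"
  unfolding approx_EF_def
proof (intro allI impI, rule ccontr)
  fix a b assume ab: "a < n" "b < n" and "\<not> 1 / 4 * v a (A b) \<le> v a (A a)"
  then have envy: "v a (A b) > 4 * v a (A a)" by simp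
  have A: "allocation n A" using opt unfolding nash_optimal_def by simp
  have pos: "\<forall>d<n. v d (A d) > 0" using nash_optimal_values_pos[OF val opt] by blast
  then have "a \<noteq> b" using envy ab by fastforce
  have cake: "\<And>d. d < n \<Longrightarrow> cake_interval (A d)" using allocation_cake_interval[OF A] .
  have nondeg: "nondegenerate (A d)" if "d < n" for d
    using valuation_degenerate[OF _ cake[OF that]] val pos that by (metis less_irrefl)
  then have ne: "\<And>d. d < n \<Longrightarrow> A d \<noteq> {} \<and> Inf (A d) < Sup (A d)"
    using nondegenerate_iff_Inf_less_Sup[OF cake] by blast
  define H where "H d = {Inf (A d)..Sup (A d)}" for d
  have "allocation n H" unfolding H_def using allocation_hull[OF A] nondeg by blast
  moreover have "\<forall>d<n. closed (H d) \<and> H d \<noteq> {}" using ne unfolding H_def by fastforce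
  ultimately obtain B where B: "allocation n B" "v a (B a) \<ge> v a (H b) / 2" "v b (B b) \<ge> v b (H b) / 2"
    "\<forall>d<n. d \<noteq> a \<longrightarrow> d \<noteq> b \<longrightarrow> v d (B d) \<ge> v d (H d)"
    using exists_allocation_halving_piece[OF val _ _ ab \<open>a \<noteq> b\<close>] by blast
  have hull_value: "v c (H d) = v c (A d)" if "c < n" "d < n" for c d
    using valuation_hull[of "v c" "A d"] val cake ne that unfolding H_def by simp
  have "NSW n v A < NSW n v B"
  proof (rule NSW_less_if_two_agents_improve[of n v A a b B, OF pos ab \<open>a \<noteq> b\<close>])
    show "v a (B a) > 2 * v a (A a)" using B(2) envy hull_value ab by simp
    show "v b (B b) \<ge> v b (A b) / 2" using B(3) hull_value ab by simp
    show "\<forall>d<n. d \<noteq> a \<longrightarrow> d \<noteq> b \<longrightarrow> v d (B d) \<ge> v d (A d)" using B(4) hull_value by simp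
  qed
  moreover have "NSW n v B \<le> NSW n v A" using opt B(1) unfolding nash_optimal_def by blast
  ultimately show False by simp
qed

theorem theorem4:
  fixes n :: nat and v :: "nat \<Rightarrow> real set \<Rightarrow> real" and \<alpha> :: real
    and Aef Aopt :: "nat \<Rightarrow> real set"
  assumes "\<forall>a<n. valuation (v a)"
    and "\<alpha> \<ge> 1"
    and "allocation n Aef" and "approx_EF n v \<alpha> Aef"
    and "nash_optimal n v Aopt"
  shows "NSW n v Aef \<ge> (1 / (2 * \<alpha>)) * NSW n v Aopt \<and> approx_EF n v 4 Aopt"
proof
  have "n > 0" using assms(3) unfolding allocation_def by (cases n) auto
  moreover have "allocation n Aopt" using assms(5) unfolding nash_optimal_def by simp
  ultimately have "NSW n v Aopt \<le> 2 * \<alpha> * NSW n v Aef"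
    using NSW_le_of_approx_EF[OF assms(1) _ _ assms(3,4)] assms(2) by simp
  then show "NSW n v Aef \<ge> (1 / (2 * \<alpha>)) * NSW n v Aopt"
    using assms(2) by (simp add: field_simps)
  show "approx_EF n v 4 Aopt" using nash_optimal_approx_EF_4[OF assms(1,5)] .
qed

end
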